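(* Let $m_1,m_2,r,n_1,n_2$ be nonnegative integers with $0\le n_2\le n_1$ and $n_1\ge 1$, and let $\gamma_{ik}\in\mathbb{C}$, $i=1,\dots,n_1-n_2$, $k=1,\dots,n_1$, be independent identically distributed random scalars drawn from a continuous (absolutely continuous) distribution on $\mathbb{C}$. Then, almost surely, the following holds: for every family of matrices $\mathbf{A}_1,\dots,\mathbf{A}_{n_1}\in\mathbb{C}^{m_1\times m_2}$ with $\operatorname{rank}(\mathbf{A}_k)\le r$ for all $k$ and \[ \gamma_{i1}\mathbf{A}_1+\gamma_{i2}\mathbf{A}_2+\cdots+\gamma_{in_1}\mathbf{A}_{n_1}=\mathbf{0}\qquad\text{for all } i=1,2,\dots,n_1-n_2, \] we have \[ \dim\Big(\mathcal{C}\big(\mathbf{A}_1,\mathbf{A}_2,\dots,\mathbf{A}_{n_1}\big)\Big)\le n_2 r . \] Moreover, equality holds if, among the $n_1$ subspaces $\mathcal{C}(\mathbf{A}_k)$, some $n_2$ of them have dimension $r$ and are linearly independent (their sum is direct), and $m_1\ge n_2 r$.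
   Context: $\mathcal{C}(\mathbf{A}_1,\dots,\mathbf{A}_n)$ denotes the column space of the horizontally concatenated matrix $[\mathbf{A}_1\ \mathbf{A}_2\ \cdots\ \mathbf{A}_n]$. *)

theory Defs
  imports "HOL-Analysis.Analysis" "HOL-Probability.Probability"
begin

definition col_space :: "'a::field^'n^'m \<Rightarrow> ('a^'m) set" where
  "col_space A = vec.span (columns A)"

text \<open>Column space of the horizontal concatenation [A_k]_{k in K}: span of all their columns.\<close>
definition col_space_concat :: "(nat \<Rightarrow> 'a::field^'n^'m) \<Rightarrow> nat set \<Rightarrow> ('a^'m) set" where
  "col_space_concat A K = vec.span (\<Union>k\<in>K. columns (A k))"

definition indep_subspaces :: "(nat \<Rightarrow> ('a::field^'m) set) \<Rightarrow> nat set \<Rightarrow> bool" where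
  "indep_subspaces V S \<longleftrightarrow>
     (\<forall>v. (\<forall>k\<in>S. v k \<in> V k) \<longrightarrow> (\<Sum>k\<in>S. v k) = 0 \<longrightarrow> (\<forall>k\<in>S. v k = 0))"

end

theory Submission
  imports Defs "Jordan_Normal_Form.Determinant"
begin

text \<open>
  Let d = n1 - n2 and split the n1 matrices into a head A_0, ..., A_(n2-1) and a tail
  A_n2, ..., A_(n1-1).  The proof has a probabilistic and a deterministic half.

  Genericity: the d x d block of coefficients acting on the tail is almost surely nonsingular.
  Its determinant is affine in the corner entry, with the leading minor as coefficient; since
  the scalar distribution has no atoms, Fubini over that single coordinate and induction on d
  show that the determinant vanishes only on a null set.

  Linear algebra: if that block is nonsingular, solving the d linear relations expresses every
  tail matrix as a fixed linear combination of the head matrices, so the column space of the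
  concatenation is spanned by the head columns.  Its dimension is therefore at most the sum of
  the head column ranks, hence at most n2 r.  Conversely, n2 independent column spaces of
  dimension r contribute exactly n2 r dimensions, which gives equality.
\<close>

subsection \<open>Dimension of spans of unions\<close>

context finite_dimensional_vector_space
begin

text \<open>Grassmann's formula, phrased for spanning sets rather than subspaces.\<close>

lemma dim_Un_plus_dim_Int:
  "dim (S \<union> T) + dim (span S \<inter> span T) = dim S + dim T"
  using dim_sums_Int[OF subspace_span subspace_span, of S T] by (simp add: span_Un[symmetric])

lemma dim_UN_le:
  assumes "finite K"
  shows "dim (\<Union>k\<in>K. C k) \<le> (\<Sum>k\<in>K. dim (C k))"
  using assms
proof (induction K rule: finite_induct)
  case (insert j K)
  have "dim (\<Union>k\<in>insert j K. C k) \<le> dim (C j) + dim (\<Union>k\<in>K. C k)"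
    using dim_Un_plus_dim_Int[of "C j" "\<Union>k\<in>K. C k"] by simp
  with insert show ?case by simp
qed simp

lemma span_UN_eq_sums:
  assumes "finite K" and "x \<in> span (\<Union>k\<in>K. C k)"
  obtains v where "\<forall>k\<in>K. v k \<in> span (C k)" and "x = (\<Sum>k\<in>K. v k)"
  using assms
proof (induction K arbitrary: x thesis rule: finite_induct)
  case empty
  then show ?case by (auto simp: span_empty)
next
  case (insert j K)
  have "x \<in> span (C j \<union> (\<Union>k\<in>K. C k))" using insert.prems by simp
  then obtain y z where x: "x = y + z" and y: "y \<in> span (C j)" and z: "z \<in> span (\<Union>k\<in>K. C k)"
    unfolding span_Un by blast
  obtain v where v: "\<forall>k\<in>K. v k \<in> span (C k)" and z_sum: "z = (\<Sum>k\<in>K. v k)"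
    using insert.IH[OF _ z] by blast
  have "(\<Sum>k\<in>K. (v(j := y)) k) = z"
    using insert.hyps z_sum by (metis fun_upd_other sum.cong)
  then show ?case
    using insert.prems(1)[of "v(j := y)"] insert.hyps v x y by auto
qed

end

text \<open>Independence of a family of subspaces passes to subfamilies (pad with zeros).\<close>

lemma indep_subspaces_subset:
  assumes indep: "indep_subspaces V S" and "T \<subseteq> S" and "finite S" and "\<forall>k\<in>S. 0 \<in> V k"
  shows "indep_subspaces V T"
  unfolding indep_subspaces_def
proof (intro allI impI ballI)
  fix v k assume v: "\<forall>k\<in>T. v k \<in> V k" "(\<Sum>k\<in>T. v k) = 0" and k: "k \<in> T"
  let ?w = "\<lambda>k. if k \<in> T then v k else 0"
  have "(\<Sum>k\<in>S. ?w k) = (\<Sum>k\<in>T. v k)"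
    using sum.inter_restrict[OF \<open>finite S\<close>, of v T] \<open>T \<subseteq> S\<close> by (simp add: Int_absorb1)
  then have "(\<Sum>k\<in>S. ?w k) = 0" using v(2) by simp
  moreover have "\<forall>k\<in>S. ?w k \<in> V k" using v assms(4) by auto
  moreover have "(\<forall>k\<in>S. ?w k \<in> V k) \<longrightarrow> (\<Sum>k\<in>S. ?w k) = 0 \<longrightarrow> (\<forall>k\<in>S. ?w k = 0)"
    using indep unfolding indep_subspaces_def by (rule spec)
  ultimately have "\<forall>k\<in>S. ?w k = 0" by blast
  then have "?w k = 0" using k \<open>T \<subseteq> S\<close> by blast
  then show "v k = 0" using k by simp
qed

lemma dim_UN_indep:
  fixes C :: "nat \<Rightarrow> ('a::field^'n) set"
  assumes "finite K" and "indep_subspaces (\<lambda>k. vec.span (C k)) K"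
  shows "vec.dim (\<Union>k\<in>K. C k) = (\<Sum>k\<in>K. vec.dim (C k))"
  using assms
proof (induction K rule: finite_induct)
  case (insert j K)
  have indep_K: "indep_subspaces (\<lambda>k. vec.span (C k)) K"
    using insert.hyps
    by (intro indep_subspaces_subset[OF insert.prems]) (auto simp: vec.span_zero)
  have trivial_Int: "vec.span (C j) \<inter> vec.span (\<Union>k\<in>K. C k) = {0}"
  proof safe
    fix x assume x_j: "x \<in> vec.span (C j)" and x_K: "x \<in> vec.span (\<Union>k\<in>K. C k)"
    then obtain v where v: "\<forall>k\<in>K. v k \<in> vec.span (C k)" and x: "x = (\<Sum>k\<in>K. v k)"
      using vec.span_UN_eq_sums[OF insert.hyps(1)] by blast
    let ?w = "v(j := - x)"
    have "(\<Sum>k\<in>K. ?w k) = (\<Sum>k\<in>K. v k)"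
      using insert.hyps by (intro sum.cong) auto
    then have "(\<Sum>k\<in>insert j K. ?w k) = 0" using insert.hyps x by simp
    moreover have "\<forall>k\<in>insert j K. ?w k \<in> vec.span (C k)"
      using v x_j insert.hyps by (auto simp: vec.span_neg)
    ultimately have "\<forall>k\<in>insert j K. ?w k = 0"
      using insert.prems unfolding indep_subspaces_def by blast
    then show "x = 0" by simp
  qed (simp_all add: vec.span_zero)
  show ?case
    using vec.dim_Un_plus_dim_Int[of "C j" "\<Union>k\<in>K. C k"] trivial_Int insert.IH[OF indep_K] insert.hyps
    by simp
qed simp

subsection \<open>Column rank over an arbitrary field\<close>

text \<open>Column rank is bounded by the (row-defined) rank, over an arbitrary field: every
  column is a combination of the coordinate vectors of a basis of the row space.\<close>

lemma dim_columns_le_rank: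
  fixes A :: "'a::field^'n^'m"
  shows "vec.dim (columns A) \<le> rank A"
proof -
  let ?row = "\<lambda>i. Finite_Cartesian_Product.row i A"
  let ?rows = "Finite_Cartesian_Product.rows A"
  obtain R where R: "R \<subseteq> ?rows" "vec.independent R" "?rows \<subseteq> vec.span R" "card R = vec.dim ?rows"
    by (rule vec.basis_exists)
  have finite_R: "finite R" using R(2) vec.finiteI_independent by blast
  have "\<exists>u. ?row i = (\<Sum>v\<in>R. u v *s v)" for i
  proof -
    have "?row i \<in> vec.span R" using R(3) by (auto simp: Finite_Cartesian_Product.rows_def)
    then show ?thesis using vec.span_finite[OF finite_R] by auto
  qed
  then obtain u where u: "\<And>i. ?row i = (\<Sum>v\<in>R. u i v *s v)" by metis
  define w where "w v = (\<chi> i. u i v)" for v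
  have column: "column j A = (\<Sum>v\<in>R. (v $ j) *s w v)" for j
  proof -
    have "column j A $ i = (\<Sum>v\<in>R. u i v * v $ j)" for i
    proof -
      have "column j A $ i = ?row i $ j"
        by (simp add: Finite_Cartesian_Product.row_def column_def)
      also have "\<dots> = (\<Sum>v\<in>R. u i v * v $ j)" by (simp only: u sum_component) simp
      finally show ?thesis .
    qed
    then show ?thesis
      by (simp add: Finite_Cartesian_Product.vec_eq_iff sum_component w_def mult.commute)
  qed
  have "columns A \<subseteq> vec.span (w ` R)"
  proof
    fix x assume "x \<in> columns A"
    then obtain j where "x = column j A" by (auto simp: columns_def)
    then show "x \<in> vec.span (w ` R)"
      by (simp add: column vec.span_sum vec.span_scale vec.span_base)
  qed
  then have "vec.dim (columns A) \<le> card (w ` R)" using vec.dim_le_card finite_R by blast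
  also have "\<dots> \<le> card R" using finite_R card_image_le by blast
  also have "\<dots> = rank A" using R(4) by (simp add: row_rank_def_gen)
  finally show ?thesis .
qed

subsection \<open>Elimination and the deterministic bound\<close>

lemma sum_lessThan_add_split:
  "(\<Sum>k<n + d. f k) = (\<Sum>k<n. f k) + (\<Sum>t<d. f (n + t))" for f :: "nat \<Rightarrow> 'a::comm_monoid_add"
  by (induction d) (simp_all add: add.assoc)

lemma det_nonzero_left_inverse:
  fixes G :: "'a::field mat"
  assumes "G \<in> carrier_mat d d" and "det G \<noteq> 0"
  obtains H where "H \<in> carrier_mat d d" and "H * G = 1\<^sub>m d"
  using det_non_zero_imp_unit[OF assms, of undefined] that
  by (auto simp: Units_def ring_mat_def)

lemma tail_combination_of_head:
  fixes \<gamma> :: "nat \<times> nat \<Rightarrow> 'a::field"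
  assumes det: "det (mat d d (\<lambda>(i,j). \<gamma> (i, n + j))) \<noteq> 0"
  obtains \<beta> where "\<And>x. \<forall>i<d. (\<Sum>k<n + d. \<gamma> (i, k) * x k) = 0 \<Longrightarrow>
      \<forall>t<d. x (n + t) = (\<Sum>l<n. \<beta> t l * x l)"
proof -
  define G where "G = mat d d (\<lambda>(i,j). \<gamma> (i, n + j))"
  define C where "C = mat d n (\<lambda>(i,l). \<gamma> (i, l))"
  have G: "G \<in> carrier_mat d d" by (simp add: G_def)
  have C: "C \<in> carrier_mat d n" by (simp add: C_def)
  obtain H where H: "H \<in> carrier_mat d d" and HG: "H * G = 1\<^sub>m d"
    using det_nonzero_left_inverse[OF G det[folded G_def]] by blast
  have "\<forall>t<d. x (n + t) = (\<Sum>l<n. (H * (- C)) $$ (t, l) * x l)"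
    if eqs: "\<forall>i<d. (\<Sum>k<n + d. \<gamma> (i, k) * x k) = 0" for x
  proof -
    define head where "head = vec n x"
    define tail where "tail = vec d (\<lambda>t. x (n + t))"
    have system: "G *\<^sub>v tail = (- C) *\<^sub>v head"
    proof (rule eq_vecI)
      fix i assume "i < dim_vec ((- C) *\<^sub>v head)"
      then have i: "i < d" using C by simp
      have "(\<Sum>l<n. \<gamma> (i, l) * x l) + (\<Sum>t<d. \<gamma> (i, n + t) * x (n + t)) = 0"
        using eqs i by (simp add: sum_lessThan_add_split)
      then show "(G *\<^sub>v tail) $ i = ((- C) *\<^sub>v head) $ i"
        using i C by (simp add: G_def C_def head_def tail_def scalar_prod_def
            lessThan_atLeast0 eq_neg_iff_add_eq_0 add.commute)
    qed (simp add: G_def C_def)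
    have "tail = (H * G) *\<^sub>v tail" using HG by (simp add: tail_def)
    also have "\<dots> = H *\<^sub>v (G *\<^sub>v tail)" using H G by (simp add: tail_def)
    also have "\<dots> = (H * (- C)) *\<^sub>v head" unfolding system using H C
      by (intro assoc_mult_mat_vec[symmetric]) (auto simp: head_def)
    finally have tail_eq: "tail = (H * (- C)) *\<^sub>v head" .
    have entry: "(M *\<^sub>v head) $ t = (\<Sum>l<n. M $$ (t, l) * x l)"
      if "M \<in> carrier_mat d n" "t < d" for M t
      using that by (simp add: head_def scalar_prod_def lessThan_atLeast0)
    have HC: "H * (- C) \<in> carrier_mat d n" using H C by simp
    show ?thesis
    proof (intro allI impI)
      fix t assume t: "t < d"
      then have "x (n + t) = tail $ t" by (simp add: tail_def)
      also have "\<dots> = ((H * (- C)) *\<^sub>v head) $ t" by (simp only: tail_eq)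
      also have "\<dots> = (\<Sum>l<n. (H * (- C)) $$ (t, l) * x l)" by (rule entry[OF HC t])
      finally show "x (n + t) = (\<Sum>l<n. (H * (- C)) $$ (t, l) * x l)" .
    qed
  qed
  then show thesis by (rule that[of "\<lambda>t l. (H * (- C)) $$ (t, l)"])
qed

text \<open>Applied entrywise to the matrices, elimination shows that the tail matrices are
  combinations of the head matrices, so the head columns span the whole column space.\<close>

lemma col_space_concat_eq_head_span:
  fixes A :: "nat \<Rightarrow> 'a::field^'n^'m" and \<gamma> :: "nat \<times> nat \<Rightarrow> 'a"
  assumes det: "det (mat d d (\<lambda>(i,j). \<gamma> (i, n + j))) \<noteq> 0"
    and eqs: "\<forall>i<d. \<forall>a b. (\<Sum>k<n + d. \<gamma> (i, k) * A k $ a $ b) = 0"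
  shows "col_space_concat A {..<n + d} = vec.span (\<Union>l<n. columns (A l))"
proof -
  obtain \<beta> where \<beta>: "\<And>x. \<forall>i<d. (\<Sum>k<n + d. \<gamma> (i, k) * x k) = 0 \<Longrightarrow>
      \<forall>t<d. x (n + t) = (\<Sum>l<n. \<beta> t l * x l)"
    by (rule tail_combination_of_head[OF det]) blast
  let ?head = "\<Union>l<n. columns (A l)"
  have tail_column: "column b (A (n + t)) = (\<Sum>l<n. \<beta> t l *s column b (A l))" if "t < d" for t b
  proof -
    have "A (n + t) $ a $ b = (\<Sum>l<n. \<beta> t l * A l $ a $ b)" for a
      using \<beta>[of "\<lambda>k. A k $ a $ b"] eqs that by simp
    then show ?thesis by (simp add: Finite_Cartesian_Product.vec_eq_iff column_def sum_component)
  qed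
  have "columns (A k) \<subseteq> vec.span ?head" if "k < n + d" for k
  proof (cases "k < n")
    case True
    then have "columns (A k) \<subseteq> ?head" by auto
    then show ?thesis using vec.span_superset[of ?head] by (rule order_trans)
  next
    case False
    define t where "t = k - n"
    have k: "k = n + t" and "t < d" using False that by (auto simp: t_def)
    then have "column b (A k) \<in> vec.span ?head" for b
      unfolding k tail_column[OF \<open>t < d\<close>]
      by (intro vec.span_sum vec.span_scale vec.span_base) (auto simp: columns_def)
    then show ?thesis by (auto simp: columns_def)
  qed
  then have "col_space_concat A {..<n + d} \<subseteq> vec.span ?head"
    unfolding col_space_concat_def by (intro vec.span_minimal vec.subspace_span UN_least) auto
  moreover have "vec.span ?head \<subseteq> col_space_concat A {..<n + d}"
    unfolding col_space_concat_def by (intro vec.span_mono UN_mono) auto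
  ultimately show ?thesis by blast
qed

lemma col_space_concat_upper_bound:
  fixes A :: "nat \<Rightarrow> 'a::field^'n^'m" and \<gamma> :: "nat \<times> nat \<Rightarrow> 'a"
  assumes det: "det (mat d d (\<lambda>(i,j). \<gamma> (i, n + j))) \<noteq> 0"
    and eqs: "\<forall>i<d. \<forall>a b. (\<Sum>k<n + d. \<gamma> (i, k) * A k $ a $ b) = 0"
    and rank: "\<forall>l<n. rank (A l) \<le> r"
  shows "vec.dim (col_space_concat A {..<n + d}) \<le> n * r"
proof -
  have "vec.dim (col_space_concat A {..<n + d}) = vec.dim (\<Union>l<n. columns (A l))"
    using col_space_concat_eq_head_span[OF det eqs] by simp
  also have "\<dots> \<le> (\<Sum>l<n. vec.dim (columns (A l)))"
    by (rule vec.dim_UN_le) simp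
  also have "\<dots> \<le> (\<Sum>l<n. r)"
    using rank dim_columns_le_rank order_trans by (intro sum_mono) blast
  finally show ?thesis by simp
qed

lemma col_space_concat_lower_bound:
  fixes A :: "nat \<Rightarrow> 'a::field^'n^'m"
  assumes "finite S" and "S \<subseteq> K" and "\<forall>k\<in>S. vec.dim (col_space (A k)) = r"
    and "indep_subspaces (\<lambda>k. col_space (A k)) S"
  shows "card S * r \<le> vec.dim (col_space_concat A K)"
proof -
  have "card S * r = (\<Sum>k\<in>S. vec.dim (columns (A k)))"
    using assms(3) by (simp add: col_space_def)
  also have "\<dots> = vec.dim (\<Union>k\<in>S. columns (A k))"
    using dim_UN_indep[OF assms(1), of "\<lambda>k. columns (A k)"] assms(4) by (simp add: col_space_def)
  also have "\<dots> \<le> vec.dim (col_space_concat A K)"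
    unfolding col_space_concat_def vec.dim_span using assms(2) by (intro vec.dim_subset UN_mono) auto
  finally show ?thesis .
qed

lemma col_space_concat_dim:
  fixes A :: "nat \<Rightarrow> 'a::field^'n^'m" and \<gamma> :: "nat \<times> nat \<Rightarrow> 'a"
  assumes "n2 \<le> n1"
    and det: "det (mat (n1 - n2) (n1 - n2) (\<lambda>(i,j). \<gamma> (i, n2 + j))) \<noteq> 0"
    and hyp: "(\<forall>k<n1. rank (A k) \<le> r) \<and>
        (\<forall>i<n1 - n2. \<forall>a b. (\<Sum>k<n1. \<gamma> (i, k) * (A k $ a $ b)) = 0)"
  shows "vec.dim (col_space_concat A {..<n1}) \<le> n2 * r \<and>
       (((\<exists>S\<subseteq>{..<n1}. card S = n2 \<and> (\<forall>k\<in>S. vec.dim (col_space (A k)) = r) \<and>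
            indep_subspaces (\<lambda>k. col_space (A k)) S) \<and> n2 * r \<le> CARD('m))
         \<longrightarrow> vec.dim (col_space_concat A {..<n1}) = n2 * r)"
proof (intro conjI impI)
  define d where "d = n1 - n2"
  have n1: "n1 = n2 + d" using assms(1) by (simp add: d_def)
  have det_d: "det (mat d d (\<lambda>(i,j). \<gamma> (i, n2 + j))) \<noteq> 0" using det by (simp add: d_def)
  have "\<forall>i<d. \<forall>a b. (\<Sum>k<n2 + d. \<gamma> (i, k) * A k $ a $ b) = 0"
    and "\<forall>l<n2. rank (A l) \<le> r"
    using hyp n1 by auto
  from col_space_concat_upper_bound[OF det_d this]
  show upper: "vec.dim (col_space_concat A {..<n1}) \<le> n2 * r" by (simp add: n1)
  assume "(\<exists>S\<subseteq>{..<n1}. card S = n2 \<and> (\<forall>k\<in>S. vec.dim (col_space (A k)) = r) \<and>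
      indep_subspaces (\<lambda>k. col_space (A k)) S) \<and> n2 * r \<le> CARD('m)"
  then obtain S where S: "S \<subseteq> {..<n1}" "card S = n2"
      "\<forall>k\<in>S. vec.dim (col_space (A k)) = r" "indep_subspaces (\<lambda>k. col_space (A k)) S"
    by blast
  have "n2 * r \<le> vec.dim (col_space_concat A {..<n1})"
    using col_space_concat_lower_bound[OF finite_subset[OF S(1)] S(1) S(3,4)] S(2) by simp
  with upper show "vec.dim (col_space_concat A {..<n1}) = n2 * r" by simp
qed

subsection \<open>Genericity of the coefficient block\<close>

text \<open>Laplace expansion along the last row: the determinant is affine in the corner entry,
  with the leading minor as slope and the determinant with zeroed corner as offset.\<close>

lemma det_affine_in_corner:
  fixes M :: "'a::comm_ring_1 mat"
  assumes M: "M \<in> carrier_mat (Suc d) (Suc d)"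
  defines "Z \<equiv> mat (Suc d) (Suc d) (\<lambda>ij. if ij = (d, d) then 0 else M $$ ij)"
  shows "det M = M $$ (d, d) * det (mat_delete M d d) + det Z"
proof -
  have Z: "Z \<in> carrier_mat (Suc d) (Suc d)" by (simp add: Z_def)
  have same_cofactor: "cofactor Z d j = cofactor M d j" for j
  proof -
    have "mat_delete Z d j = mat_delete M d j"
      using M by (intro eq_matI) (auto simp: mat_delete_def Z_def)
    then show ?thesis by (simp add: cofactor_def)
  qed
  have Z_last_row: "Z $$ (d, j) = (if j = d then 0 else M $$ (d, j))" if "j < Suc d" for j
    using that by (simp add: Z_def)
  have "det Z = (\<Sum>j<d. M $$ (d, j) * cofactor M d j)"
    using laplace_expansion_row[OF Z, of d] by (simp add: Z_last_row same_cofactor)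
  moreover have "det M = (\<Sum>j<d. M $$ (d, j) * cofactor M d j) + M $$ (d, d) * cofactor M d d"
    using laplace_expansion_row[OF M, of d] by simp
  ultimately show ?thesis by (simp add: cofactor_def)
qed

lemma no_atoms_if_absolutely_continuous:
  fixes \<mu> :: "'a::euclidean_space measure"
  assumes "absolutely_continuous lborel \<mu>"
  shows "emeasure \<mu> {z} = 0"
proof -
  have "{z} \<in> null_sets lborel" by (rule finite_imp_null_set_lborel) simp
  then show ?thesis using assms unfolding absolutely_continuous_def by auto
qed

lemma measurable_coordinate:
  fixes \<mu> :: "complex measure"
  assumes "sets \<mu> = sets borel" and "c \<in> I"
  shows "(\<lambda>\<gamma>. \<gamma> c) \<in> borel_measurable (PiM I (\<lambda>_. \<mu>))"
  using measurable_component_singleton[OF assms(2), of "\<lambda>_. \<mu>"]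
    measurable_cong_sets[OF refl assms(1)] by blast

lemma borel_measurable_det:
  fixes f :: "nat \<times> nat \<Rightarrow> 'b \<Rightarrow> 'a::{real_normed_field, second_countable_topology}"
  assumes "\<And>i j. i < d \<Longrightarrow> j < d \<Longrightarrow> f (i, j) \<in> borel_measurable N"
  shows "(\<lambda>\<gamma>. det (mat d d (\<lambda>ij. f ij \<gamma>))) \<in> borel_measurable N"
proof -
  have "det (mat d d (\<lambda>ij. f ij \<gamma>)) =
      (\<Sum>p\<in>{p. p permutes {0..<d}}. signof p * (\<Prod>i=0..<d. f (i, p i) \<gamma>))" for \<gamma>
    unfolding det_def
    by (auto intro!: sum.cong prod.cong arg_cong2[where f = "(*)"] simp: permutes_in_image)
  moreover have "(\<lambda>\<gamma>. \<Sum>p\<in>{p. p permutes {0..<d}}. signof p * (\<Prod>i=0..<d. f (i, p i) \<gamma>))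
      \<in> borel_measurable N"
    using assms
    by (intro borel_measurable_sum borel_measurable_times borel_measurable_const
        borel_measurable_prod) (auto simp: permutes_in_image)
  ultimately show ?thesis by simp
qed

text \<open>Under an atomless product measure, a function that is affine in one coordinate,
  with coefficients not depending on that coordinate, almost surely does not vanish where
  its slope does not vanish: each slice meets the zero set in at most one point.\<close>

lemma AE_affine_in_coordinate:
  fixes \<mu> :: "complex measure" and c :: 'i
  assumes fin: "finite I" and c: "c \<in> I" and P: "prob_space \<mu>" and S: "sets \<mu> = sets borel"
    and no_atoms: "\<And>z. emeasure \<mu> {z} = 0"
    and g: "g \<in> borel_measurable (PiM I (\<lambda>_. \<mu>))"
    and h: "h \<in> borel_measurable (PiM I (\<lambda>_. \<mu>))"
    and g_indep: "\<And>\<gamma> y. g (\<gamma>(c := y)) = g \<gamma>" and h_indep: "\<And>\<gamma> y. h (\<gamma>(c := y)) = h \<gamma>"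
  shows "AE \<gamma> in PiM I (\<lambda>_. \<mu>). g \<gamma> \<noteq> 0 \<longrightarrow> \<gamma> c * g \<gamma> + h \<gamma> \<noteq> 0"
proof -
  interpret product_sigma_finite "\<lambda>_. \<mu>"
    using prob_space_imp_sigma_finite[OF P] by (simp add: product_sigma_finite_def)
  let ?M = "PiM I (\<lambda>_. \<mu>)"
  define N where "N = {\<gamma> \<in> space ?M. g \<gamma> \<noteq> 0 \<and> \<gamma> c * g \<gamma> + h \<gamma> = 0}"
  have N: "N \<in> sets ?M"
    unfolding N_def using g h measurable_coordinate[OF S c] by measurable
  have I: "I = insert c (I - {c})" using c by auto
  have slice_null: "(\<integral>\<^sup>+y. indicator N (x(c := y)) \<partial>\<mu>) = 0" for x
  proof -
    have "indicator N (x(c := y)) \<le> (indicator {- h x / g x} y :: ennreal)" for y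
    proof (cases "x(c := y) \<in> N")
      case True
      then have "g x \<noteq> 0" "y * g x + h x = 0"
        unfolding N_def using g_indep[of x y] h_indep[of x y] by auto
      then have "y = - h x / g x" by (simp add: field_simps add_eq_0_iff)
      then show ?thesis using True by simp
    qed simp
    then have "(\<integral>\<^sup>+y. indicator N (x(c := y)) \<partial>\<mu>) \<le> (\<integral>\<^sup>+y. indicator {- h x / g x} y \<partial>\<mu>)"
      by (intro nn_integral_mono)
    also have "\<dots> = emeasure \<mu> {- h x / g x}" by (simp add: S)
    finally show ?thesis by (simp add: no_atoms)
  qed
  have "emeasure ?M N = (\<integral>\<^sup>+\<gamma>. indicator N \<gamma> \<partial>?M)" using N by simp
  also have "\<dots> = (\<integral>\<^sup>+x. (\<integral>\<^sup>+y. indicator N (x(c := y)) \<partial>\<mu>) \<partial>PiM (I - {c}) (\<lambda>_. \<mu>))"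
    using product_nn_integral_insert[of "I - {c}" c "indicator N"] N fin I
    by (metis Diff_iff finite_Diff insertI1 borel_measurable_indicator)
  also have "\<dots> = 0" by (simp add: slice_null)
  finally have "N \<in> null_sets ?M" using N by auto
  then show ?thesis by (rule AE_I') (auto simp: N_def)
qed

text \<open>By
  induction on the size, the leading minor is a.s. nonzero, and then the corner expansion
  and the previous lemma apply.\<close>

lemma AE_det_nonzero:
  fixes \<mu> :: "complex measure" and \<iota> :: "nat \<times> nat \<Rightarrow> 'i"
  assumes fin: "finite I" and P: "prob_space \<mu>" and S: "sets \<mu> = sets borel"
    and no_atoms: "\<And>z. emeasure \<mu> {z} = 0"
    and inj: "inj_on \<iota> ({..<d} \<times> {..<d})" and sub: "\<iota> ` ({..<d} \<times> {..<d}) \<subseteq> I"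
  shows "AE \<gamma> in PiM I (\<lambda>_. \<mu>). det (mat d d (\<lambda>ij. \<gamma> (\<iota> ij))) \<noteq> 0"
  using inj sub
proof (induction d)
  case 0
  then show ?case by (simp add: det_def)
next
  case (Suc d)
  let ?N = "PiM I (\<lambda>_. \<mu>)"
  have IH: "AE \<gamma> in ?N. det (mat d d (\<lambda>ij. \<gamma> (\<iota> ij))) \<noteq> 0"
    using Suc by (intro Suc.IH) (auto intro: inj_on_subset)
  define c where "c = \<iota> (d, d)"
  have c: "c \<in> I" using Suc.prems(2) by (auto simp: c_def)
  have off_corner: "\<iota> ij \<noteq> c" if "ij \<in> {..<Suc d} \<times> {..<Suc d}" "ij \<noteq> (d, d)" for ij
    using inj_onD[OF Suc.prems(1), of ij "(d, d)"] that by (auto simp: c_def)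
  have coord: "(\<lambda>\<gamma>. \<gamma> (\<iota> ij)) \<in> borel_measurable ?N" if "ij \<in> {..<Suc d} \<times> {..<Suc d}" for ij
    using Suc.prems(2) that by (intro measurable_coordinate[OF S]) auto
  define g where "g \<gamma> = det (mat d d (\<lambda>ij. \<gamma> (\<iota> ij)))" for \<gamma> :: "'i \<Rightarrow> complex"
  define h where "h \<gamma> = det (mat (Suc d) (Suc d)
      (\<lambda>ij. if ij = (d, d) then 0 else \<gamma> (\<iota> ij)))" for \<gamma> :: "'i \<Rightarrow> complex"
  have expand: "det (mat (Suc d) (Suc d) (\<lambda>ij. \<gamma> (\<iota> ij))) = \<gamma> c * g \<gamma> + h \<gamma>" for \<gamma>
  proof -
    let ?M = "mat (Suc d) (Suc d) (\<lambda>ij. \<gamma> (\<iota> ij))"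
    have "mat_delete ?M d d = mat d d (\<lambda>ij. \<gamma> (\<iota> ij))"
      by (intro eq_matI) (auto simp: mat_delete_def)
    moreover have "mat (Suc d) (Suc d) (\<lambda>ij. if ij = (d, d) then 0 else ?M $$ ij) =
        mat (Suc d) (Suc d) (\<lambda>ij. if ij = (d, d) then 0 else \<gamma> (\<iota> ij))"
      by (intro eq_matI) auto
    ultimately show ?thesis
      using det_affine_in_corner[of ?M d] by (simp add: g_def h_def c_def)
  qed
  have g_indep: "g (\<gamma>(c := y)) = g \<gamma>" for \<gamma> y
    unfolding g_def using off_corner by (intro arg_cong[where f = det] eq_matI) auto
  have h_indep: "h (\<gamma>(c := y)) = h \<gamma>" for \<gamma> y
    unfolding h_def using off_corner by (intro arg_cong[where f = det] eq_matI) auto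
  have "g \<in> borel_measurable ?N"
    unfolding g_def using coord by (intro borel_measurable_det) auto
  moreover have "h \<in> borel_measurable ?N"
    unfolding h_def using coord by (intro borel_measurable_det) auto
  ultimately have "AE \<gamma> in ?N. g \<gamma> \<noteq> 0 \<longrightarrow> \<gamma> c * g \<gamma> + h \<gamma> \<noteq> 0"
    using AE_affine_in_coordinate[OF fin c P S no_atoms _ _ g_indep h_indep] by blast
  with IH show ?case
    by eventually_elim (simp add: expand g_def)
qed

theorem lemma1:
  fixes \<mu> :: "complex measure" and n1 n2 r :: nat
  assumes "n2 \<le> n1" and "1 \<le> n1"
    and "prob_space \<mu>" and "sets \<mu> = sets borel"
    and "absolutely_continuous lborel \<mu>"
  shows "AE \<gamma> in PiM ({..<n1 - n2} \<times> {..<n1}) (\<lambda>_. \<mu>).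
     \<forall>A :: nat \<Rightarrow> complex^'m2^'m1.
       ((\<forall>k<n1. rank (A k) \<le> r) \<and>
        (\<forall>i<n1 - n2. \<forall>a b. (\<Sum>k<n1. \<gamma> (i, k) * (A k $ a $ b)) = 0)) \<longrightarrow>
       vec.dim (col_space_concat A {..<n1}) \<le> n2 * r \<and>
       (((\<exists>S\<subseteq>{..<n1}. card S = n2 \<and> (\<forall>k\<in>S. vec.dim (col_space (A k)) = r) \<and>
            indep_subspaces (\<lambda>k. col_space (A k)) S) \<and> n2 * r \<le> CARD('m1))
         \<longrightarrow> vec.dim (col_space_concat A {..<n1}) = n2 * r)"
proof -
  have "AE \<gamma> in PiM ({..<n1 - n2} \<times> {..<n1}) (\<lambda>_. \<mu>).
      det (mat (n1 - n2) (n1 - n2) (\<lambda>ij. \<gamma> ((\<lambda>(i, j). (i, n2 + j)) ij))) \<noteq> 0"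
    using no_atoms_if_absolutely_continuous[OF assms(5)]
    by (intro AE_det_nonzero assms(3,4)) (auto simp: inj_on_def)
  then have "AE \<gamma> in PiM ({..<n1 - n2} \<times> {..<n1}) (\<lambda>_. \<mu>).
      det (mat (n1 - n2) (n1 - n2) (\<lambda>(i, j). \<gamma> (i, n2 + j))) \<noteq> 0"
    by (simp add: case_prod_beta')
  then show ?thesis
    by (rule eventually_mono) (use col_space_concat_dim[OF assms(1)] in blast)
qed

end
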